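(* Let $p$ be a prime and $F$ a field of characteristic $p$. Let $L\in F[x]$ be a $p$-polynomial of $p$-degree $n$ with no repeated roots, let $E$ be a splitting field of $L$ over $F$, and let $V_L\subseteq E$ be the $\mathbb{F}_p$-space of roots of $L$. Let $P(x)\in F[x]$ be the polynomial with $L(x)/x=P(x^{p-1})$, and let $L_P\in F[x]$ be a $p$-linearized polynomial of smallest degree that is divisible by $P$. Let $\alpha_1,\dots,\alpha_n$ be an $\mathbb{F}_p$-basis of $V_L$. Then every element $\alpha_1^{k_1}\alpha_2^{k_2}\cdots\alpha_n^{k_n}$, where $k_1,\dots,k_n$ are nonnegative integers with $k_1+\cdots+k_n=p-1$, is a root of $L_P$.
   Context: A $p$-polynomial (p-linearized polynomial) of $p$-degree $n$ is $\sum_{i=0}^n a_ix^{p^i}$ with $a_n\neq0$. Since each $p^i-1$ is divisible by $p-1$, $L(x)/x$ is a polynomial in $x^{p-1}$, so $P$ is well defined. *)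

theory Defs
  imports "HOL-Computational_Algebra.Polynomial"
begin

definition field_hom :: "('a::field \<Rightarrow> 'b::field) \<Rightarrow> bool" where
  "field_hom f \<longleftrightarrow> f 0 = 0 \<and> f 1 = 1 \<and>
     (\<forall>x y. f (x + y) = f x + f y) \<and> (\<forall>x y. f (x * y) = f x * f y)"

definition is_subfield :: "'b::field set \<Rightarrow> bool" where
  "is_subfield S \<longleftrightarrow> 0 \<in> S \<and> 1 \<in> S \<and> (\<forall>x\<in>S. \<forall>y\<in>S. x + y \<in> S \<and> x * y \<in> S)
     \<and> (\<forall>x\<in>S. - x \<in> S \<and> inverse x \<in> S)"

definition splits :: "'b::field poly \<Rightarrow> bool" where
  "splits q \<longleftrightarrow> (\<exists>c xs. q = smult c (\<Prod>x\<leftarrow>xs. [:- x, 1:]))"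

(* E (the whole type 'b) is a splitting field of L over F, via the embedding f *)
definition is_splitting_field :: "('a::field \<Rightarrow> 'b::field) \<Rightarrow> 'a poly \<Rightarrow> bool" where
  "is_splitting_field f L \<longleftrightarrow> field_hom f \<and> splits (map_poly f L) \<and>
     (\<forall>S. is_subfield S \<and> range f \<subseteq> S \<and> {x. poly (map_poly f L) x = 0} \<subseteq> S \<longrightarrow> S = UNIV)"

definition p_linearized :: "nat \<Rightarrow> 'a::comm_ring_1 poly \<Rightarrow> bool" where
  "p_linearized p L \<longleftrightarrow> L \<noteq> 0 \<and> (\<forall>i. coeff L i \<noteq> 0 \<longrightarrow> (\<exists>j. i = p ^ j))"

definition p_polynomial :: "nat \<Rightarrow> nat \<Rightarrow> 'a::comm_ring_1 poly \<Rightarrow> bool" where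
  "p_polynomial p n L \<longleftrightarrow> p_linearized p L \<and> degree L = p ^ n"

(* alpha 0, ..., alpha (n-1) is an F_p-basis of V (F_p = prime field, elements of_nat c, c < p) *)
definition Fp_basis :: "nat \<Rightarrow> nat \<Rightarrow> (nat \<Rightarrow> 'b::field) \<Rightarrow> 'b set \<Rightarrow> bool" where
  "Fp_basis p n \<alpha> V \<longleftrightarrow> (\<forall>i<n. \<alpha> i \<in> V) \<and>
     (\<forall>c::nat\<Rightarrow>nat. (\<forall>i<n. c i < p) \<and> (\<Sum>i<n. of_nat (c i) * \<alpha> i) = 0 \<longrightarrow> (\<forall>i<n. c i = 0)) \<and>
     (\<forall>v\<in>V. \<exists>c::nat\<Rightarrow>nat. (\<forall>i<n. c i < p) \<and> v = (\<Sum>i<n. of_nat (c i) * \<alpha> i))"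

end

(*
  Evaluation of a p-linearized polynomial is additive in characteristic p, so l = LP(-) is
  additive and the roots V of L form an additive group. For 0 <> v in V, L(v) = v P(v^(p-1))
  forces P, hence LP, to vanish at v^(p-1): this is the case of a single factor.
  Factors are merged by polarization: if l(A (u + s w)^K) = 0 for all s in F_p with K < p,
  then s |-> l(A (u + s w)^K) is a polynomial of degree at most K vanishing on F_p, so all its
  coefficients binom(K,j) l(A w^j u^(K-j)) vanish, and binom(K,j) is a unit mod p.
  Induction on the number of factors gives every monomial of total degree p - 1.
*)

theory Submission
  imports Defs "HOL-Computational_Algebra.Primes" "HOL-Number_Theory.Cong"
begin

lemma inj_on_of_nat_lessThan_CHAR: "inj_on (of_nat :: nat \<Rightarrow> 'a::semiring_1_cancel) {..<CHAR('a)}"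
  by (intro inj_onI) (auto simp: of_nat_eq_iff_cong_CHAR intro: cong_less_modulus_unique_nat)

lemma poly_eq_0_if_vanishes_on_prime_field:
  fixes q :: "'a::idom poly"
  assumes "degree q < CHAR('a)" and "\<And>s. s < CHAR('a) \<Longrightarrow> poly q (of_nat s) = 0"
  shows "q = 0"
proof (rule ccontr)
  assume "q \<noteq> 0"
  have "CHAR('a) = card ((of_nat :: nat \<Rightarrow> 'a) ` {..<CHAR('a)})"
    by (simp add: card_image inj_on_of_nat_lessThan_CHAR)
  also have "\<dots> \<le> card {x. poly q x = 0}"
    using assms(2) by (intro card_mono poly_roots_finite \<open>q \<noteq> 0\<close>) auto
  also have "\<dots> \<le> degree q"
    using \<open>q \<noteq> 0\<close> by (rule card_poly_roots_bound)
  finally show False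
    using assms(1) by simp
qed

lemma of_nat_choose_neq_0_if_less_CHAR:
  assumes "prime CHAR('a::semiring_1)" and "K < CHAR('a)" and "j \<le> K"
  shows "(of_nat (K choose j) :: 'a) \<noteq> 0"
proof
  assume "(of_nat (K choose j) :: 'a) = 0"
  then have "CHAR('a) dvd fact K"
    using binomial_fact_lemma[OF assms(3)] by (metis of_nat_eq_0_iff_char_dvd dvd_mult)
  then show False
    using assms(1,2) by (simp add: prime_dvd_fact_iff)
qed

lemma additive_of_nat_mult:
  fixes l :: "'a::ring_1 \<Rightarrow> 'b::ring_1"
  assumes "additive l"
  shows "l (of_nat n * x) = of_nat n * l x"
  using additive.sum[OF assms, of "\<lambda>_. x" "{..<n}"] by simp

lemma additive_polarization:
  fixes l :: "'e::comm_ring_1 \<Rightarrow> 'b::idom"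
  assumes l: "additive l" and "prime CHAR('b)" and K: "K < CHAR('b)" and "j \<le> K"
    and vanish: "\<And>s. s < CHAR('b) \<Longrightarrow> l (A * (x + of_nat s * w) ^ K) = 0"
  shows "l (A * w ^ j * x ^ (K - j)) = 0"
proof -
  define c where "c i = of_nat (K choose i) * l (A * w ^ i * x ^ (K - i))" for i
  define q where "q = (\<Sum>i\<le>K. monom (c i) i)"
  have "poly q (of_nat s) = l (A * (x + of_nat s * w) ^ K)" for s
  proof -
    have "A * (x + of_nat s * w) ^ K = (\<Sum>i\<le>K. of_nat ((K choose i) * s ^ i) * (A * w ^ i * x ^ (K - i)))"
      by (simp add: add.commute[of x] binomial_ring sum_distrib_left power_mult_distrib mult_ac)
    then have "l (A * (x + of_nat s * w) ^ K) = (\<Sum>i\<le>K. of_nat ((K choose i) * s ^ i) * l (A * w ^ i * x ^ (K - i)))"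
      by (simp only: additive.sum[OF l] additive_of_nat_mult[OF l])
    then show ?thesis
      by (simp add: q_def c_def poly_sum poly_monom mult_ac)
  qed
  moreover have "degree q \<le> K"
    by (auto simp: q_def intro!: degree_sum_le degree_monom_le order.trans[OF degree_monom_le])
  ultimately have "q = 0"
    using K vanish by (intro poly_eq_0_if_vanishes_on_prime_field) auto
  moreover have "coeff q j = c j"
    using \<open>j \<le> K\<close> by (simp add: q_def coeff_sum coeff_monom)
  ultimately have "c j = 0"
    by simp
  then show ?thesis
    using of_nat_choose_neq_0_if_less_CHAR[OF assms(2) K \<open>j \<le> K\<close>] by (simp add: c_def)
qed

lemma additive_vanishes_on_products:
  fixes l :: "'e::comm_ring_1 \<Rightarrow> 'b::idom" and V :: "'e set"
    and n :: nat and u :: "nat \<Rightarrow> 'e" and k :: "nat \<Rightarrow> nat"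
  assumes l: "additive l" and p: "prime p" "CHAR('b) = p"
    and V: "0 \<in> V" "\<And>v w. v \<in> V \<Longrightarrow> w \<in> V \<Longrightarrow> v + w \<in> V"
    and power_vanishes: "\<And>v. v \<in> V \<Longrightarrow> v \<noteq> 0 \<Longrightarrow> l (v ^ (p - 1)) = 0"
  shows "(\<And>i. i < n \<Longrightarrow> u i \<in> V) \<Longrightarrow> (\<Sum>i<n. k i) = p - 1 \<Longrightarrow> l (\<Prod>i<n. u i ^ k i) = 0"
proof (induction n arbitrary: u k)
  case 0
  then show ?case
    using prime_gt_1_nat[OF p(1)] by simp
next
  case (Suc n)
  show ?case
  proof (cases n)
    case 0
    then show ?thesis
      using Suc.prems power_vanishes prime_gt_1_nat[OF p(1)]
      by (cases "u 0 = 0") (simp_all add: additive.zero[OF l] power_0_left)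
  next
    case (Suc m)
    define A where "A = (\<Prod>i<m. u i ^ k i)"
    define K where "K = k m + k n"
    have of_nat_mult_in_V: "of_nat s * w \<in> V" if "w \<in> V" for s w
      using that V by (induction s) (auto simp: distrib_right)
    have sum_k: "(\<Sum>i<m. k i) + K = p - 1"
      using \<open>(\<Sum>i<Suc n. k i) = p - 1\<close> by (simp add: Suc K_def)
    have "l (A * (u m + of_nat s * u n) ^ K) = 0" for s
    proof -
      let ?u = "u(m := u m + of_nat s * u n)" and ?k = "k(m := K)"
      have "l (\<Prod>i<Suc m. ?u i ^ ?k i) = 0"
      proof (rule Suc.IH[unfolded \<open>n = Suc m\<close>])
        show "?u i \<in> V" if "i < Suc m" for i
          using that Suc.prems(1) by (auto simp: Suc V(2) of_nat_mult_in_V)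
        have "(\<Sum>i<m. ?k i) = (\<Sum>i<m. k i)"
          by (intro sum.cong) auto
        then show "(\<Sum>i<Suc m. ?k i) = p - 1"
          using sum_k by simp
      qed
      moreover have "(\<Prod>i<m. ?u i ^ ?k i) = A"
        unfolding A_def by (intro prod.cong) auto
      ultimately show ?thesis
        by simp
    qed
    then have "l (A * u n ^ k n * u m ^ (K - k n)) = 0"
      using p sum_k prime_gt_0_nat[OF p(1)] by (intro additive_polarization[OF l]) (auto simp: K_def)
    moreover have "(\<Prod>i<Suc n. u i ^ k i) = A * u n ^ k n * u m ^ (K - k n)"
      by (simp add: Suc A_def K_def mult_ac)
    ultimately show ?thesis
      by simp
  qed
qed

lemma map_poly_add_hom:
  assumes "f 0 = 0" and "\<And>x y. f (x + y) = f x + f y"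
  shows "map_poly f (p + q) = map_poly f p + map_poly f q"
  by (intro poly_eqI) (simp add: coeff_map_poly assms)

lemma map_poly_mult_hom:
  fixes f :: "'a::comm_semiring_0 \<Rightarrow> 'b::comm_semiring_0"
  assumes f0: "f 0 = 0" and add: "\<And>x y. f (x + y) = f x + f y" and mult: "\<And>x y. f (x * y) = f x * f y"
  shows "map_poly f (p * q) = map_poly f p * map_poly f q"
  by (induction p)
    (simp_all add: mult_pCons_left map_poly_add_hom[OF f0 add] map_poly_smult[OF f0 mult] map_poly_pCons f0)

lemma map_poly_pcompose_hom:
  fixes f :: "'a::comm_semiring_0 \<Rightarrow> 'b::comm_semiring_0"
  assumes f0: "f 0 = 0" and add: "\<And>x y. f (x + y) = f x + f y" and mult: "\<And>x y. f (x * y) = f x * f y"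
  shows "map_poly f (pcompose p q) = pcompose (map_poly f p) (map_poly f q)"
  by (induction p)
    (simp_all add: pcompose_pCons map_poly_add_hom[OF f0 add] map_poly_mult_hom[OF assms] map_poly_pCons f0)

lemma field_hom_of_nat: "field_hom f \<Longrightarrow> f (of_nat n) = of_nat n"
  by (induction n) (simp_all add: field_hom_def)

lemma field_hom_eq_0_iff:
  assumes "field_hom f"
  shows "f x = 0 \<longleftrightarrow> x = 0"
proof
  assume "f x = 0"
  show "x = 0"
  proof (rule ccontr)
    assume "x \<noteq> 0"
    then have "f 1 = f x * f (inverse x)"
      using assms by (simp add: field_hom_def flip: right_inverse)
    then show False
      using assms \<open>f x = 0\<close> by (simp add: field_hom_def)
  qed
qed (use assms in \<open>simp add: field_hom_def\<close>)

lemma CHAR_field_hom: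
  fixes f :: "'a::field \<Rightarrow> 'b::field"
  assumes "field_hom f"
  shows "CHAR('b) = CHAR('a)"
proof -
  have "(of_nat m :: 'b) = 0 \<longleftrightarrow> (of_nat m :: 'a) = 0" for m
    using field_hom_of_nat[OF assms, of m] field_hom_eq_0_iff[OF assms] by metis
  then show ?thesis
    by (intro CHAR_eqI) (auto simp: of_nat_eq_0_iff_char_dvd)
qed

lemma p_linearized_map_poly:
  assumes "field_hom f" and "p_linearized p Q"
  shows "p_linearized p (map_poly f Q)"
  using assms field_hom_eq_0_iff[OF assms(1)]
  by (auto simp: p_linearized_def coeff_map_poly map_poly_eq_0_iff)

lemma additive_poly_p_linearized:
  fixes g :: "'a::comm_ring_1 poly"
  assumes "prime p" and "CHAR('a) = p" and "p_linearized p g"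
  shows "additive (poly g)"
proof
  fix x y :: 'a
  have "coeff g i * (x + y) ^ i = coeff g i * x ^ i + coeff g i * y ^ i" for i
  proof (cases "coeff g i = 0")
    case False
    then obtain j where "i = p ^ j"
      using assms(3) by (auto simp: p_linearized_def)
    then have "(x + y) ^ i = x ^ i + y ^ i"
      using assms(1,2) by (intro freshmans_dream') auto
    then show ?thesis
      by (simp add: distrib_left)
  qed simp
  then show "poly g (x + y) = poly g x + poly g y"
    by (simp add: poly_altdef sum.distrib)
qed

lemma poly_map_poly_dvd_at_power_of_root:
  fixes f :: "'a::field \<Rightarrow> 'e::field"
  assumes f: "field_hom f" and L: "L = monom 1 1 * pcompose P (monom 1 d)" and "P dvd Q"
    and "poly (map_poly f L) v = 0" and "v \<noteq> 0"
  shows "poly (map_poly f Q) (v ^ d) = 0"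
proof -
  have f_hom: "f 0 = 0" "\<And>x y. f (x + y) = f x + f y" "\<And>x y. f (x * y) = f x * f y"
    using f by (simp_all add: field_hom_def)
  have "poly (map_poly f L) v = v * poly (map_poly f P) (v ^ d)"
    using f by (simp add: L map_poly_mult_hom[OF f_hom] map_poly_pcompose_hom[OF f_hom]
        map_poly_monom poly_pcompose poly_monom field_hom_def)
  moreover obtain R where "Q = P * R"
    using \<open>P dvd Q\<close> by blast
  ultimately show ?thesis
    using assms(4,5) by (simp add: map_poly_mult_hom[OF f_hom])
qed

theorem lemma5p1:
  fixes p n :: nat
    and L P LP :: "'a::field poly"
    and f :: "'a \<Rightarrow> 'e::field"
    and \<alpha> :: "nat \<Rightarrow> 'e"
  assumes "prime p"
    and "CHAR('a) = p"
    and "p_polynomial p n L"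
    and "rsquarefree (map_poly f L)"
    and "is_splitting_field f L"
    and "L = monom 1 1 * pcompose P (monom 1 (p - 1))"
    and "p_linearized p LP" and "P dvd LP"
    and "\<And>Q. p_linearized p Q \<Longrightarrow> P dvd Q \<Longrightarrow> degree LP \<le> degree Q"
    and "Fp_basis p n \<alpha> {x. poly (map_poly f L) x = 0}"
  shows "\<forall>k::nat \<Rightarrow> nat. (\<Sum>i<n. k i) = p - 1 \<longrightarrow>
           poly (map_poly f LP) (\<Prod>i<n. \<alpha> i ^ k i) = 0"
proof (intro allI impI)
  fix k :: "nat \<Rightarrow> nat"
  assume "(\<Sum>i<n. k i) = p - 1"
  have f: "field_hom f"
    using assms(5) by (simp add: is_splitting_field_def)
  have char: "CHAR('e) = p"
    using CHAR_field_hom[OF f] assms(2) by simp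
  have additive: "additive (poly (map_poly f Q))" if "p_linearized p Q" for Q
    using assms(1) char p_linearized_map_poly[OF f that] by (rule additive_poly_p_linearized)
  have "additive (poly (map_poly f L))"
    using additive assms(3) by (simp add: p_polynomial_def)
  then show "poly (map_poly f LP) (\<Prod>i<n. \<alpha> i ^ k i) = 0"
    using assms(1,10) char \<open>(\<Sum>i<n. k i) = p - 1\<close>
      poly_map_poly_dvd_at_power_of_root[OF f assms(6,8)]
    by (intro additive_vanishes_on_products[OF additive[OF assms(7)], where V = "{x. poly (map_poly f L) x = 0}"])
      (auto simp: Fp_basis_def additive.zero additive.add)
qed

end
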